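(* Let $(K,Q)$ be an admissible pair for the control system $\dot x(t)=F(x(t),\omega(t))$, $\omega\in\mathcal{U}$, on $M$. Then for every $\tau>0$ and every $f\in C(U,\mathbb{R})$, \[ P_{inv}(f,K,Q)=\limsup_{n\rightarrow\infty}\frac{1}{n\tau}\log a_{n\tau}(f,K,Q). \]
   Context: $M$ is a smooth (connected, second countable, Hausdorff, $C^\infty$) manifold. A control system on $M$ is $\dot x(t)=F(x(t),\omega(t))$, where $U\subset\mathbb{R}^m$ is compact (the control range), $\mathcal{U}$ is the set of measurable $\omega:\mathbb{R}\to\mathbb{R}^m$ with $\omega(t)\in U$ a.e., $F:M\times\mathbb{R}^m\to TM$ is $C^1$ with $F(\cdot,u)$ a smooth vector field for each $u\in U$, and for each $x\in M,\omega\in\mathcal{U}$ there is a unique solution $\varphi(t,x,\omega)$ defined for all $t\in\mathbb{R}$. A pair $(K,Q)$ of nonempty subsets of $M$ is admissible if $K$ is compact and for each $x\in K$ there is $\omega\in\mathcal{U}$ with $\varphi(t,x,\omega)\in Q$ for all $t\ge 0$. For $\tau>0$, a set $\mathcal{S}\subset\mathcal{U}$ is $(\tau,K,Q)$-spanning if for every $x\in K$ there is $\omega\in\mathcal{S}$ with $\varphi(t,x,\omega)\in Q$ for all $t\in[0,\tau]$. For $f\in C(U,\mathbb{R})$ (a potential) let $(S_\tau f)(\omega)=\int_0^\tau f(\omega(t))\,dt$, $a_\tau(f,K,Q)=\inf\{\sum_{\omega\in\mathcal{S}}e^{(S_\tau f)(\omega)}:\mathcal{S}\text{ is }(\tau,K,Q)\text{-spanning}\}$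 (possibly $+\infty$), and the invariance pressure $P_{inv}(f,K,Q)=\limsup_{\tau\to\infty}\frac{1}{\tau}\log a_\tau(f,K,Q)$. *)

theory Defs
  imports "HOL-Analysis.Analysis"
begin

text \<open>Abstract control system: the state space is a type 'x, controls take values in
  real^'m, and phi t x w is the solution at time t starting in x under control w.\<close>

definition admissible_controls :: "(real^'m) set \<Rightarrow> (real \<Rightarrow> real^'m) set" where
  "admissible_controls U =
     {w. w \<in> borel_measurable lebesgue \<and> (AE t in lebesgue. w t \<in> U)}"

definition admissible_pair ::
  "(real \<Rightarrow> 'x \<Rightarrow> (real \<Rightarrow> real^'m) \<Rightarrow> 'x) \<Rightarrow> (real^'m) set \<Rightarrow> 'x::topological_space set \<Rightarrow> 'x set \<Rightarrow> bool" where
  "admissible_pair phi U K Q \<longleftrightarrow> K \<noteq> {} \<and> Q \<noteq> {} \<and> compact K \<and>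
     (\<forall>x\<in>K. \<exists>w\<in>admissible_controls U. \<forall>t\<ge>0. phi t x w \<in> Q)"

definition spanning ::
  "(real \<Rightarrow> 'x \<Rightarrow> (real \<Rightarrow> real^'m) \<Rightarrow> 'x) \<Rightarrow> (real^'m) set \<Rightarrow> real \<Rightarrow> 'x set \<Rightarrow> 'x set
    \<Rightarrow> (real \<Rightarrow> real^'m) set \<Rightarrow> bool" where
  "spanning phi U \<tau> K Q S \<longleftrightarrow> S \<subseteq> admissible_controls U \<and>
     (\<forall>x\<in>K. \<exists>w\<in>S. \<forall>t\<in>{0..\<tau>}. phi t x w \<in> Q)"

definition birkhoff_sum :: "(real^'m \<Rightarrow> real) \<Rightarrow> real \<Rightarrow> (real \<Rightarrow> real^'m) \<Rightarrow> real" where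
  "birkhoff_sum f \<tau> w = integral {0..\<tau>} (\<lambda>t. f (w t))"

definition a_inv ::
  "(real \<Rightarrow> 'x \<Rightarrow> (real \<Rightarrow> real^'m) \<Rightarrow> 'x) \<Rightarrow> (real^'m) set \<Rightarrow> (real^'m \<Rightarrow> real) \<Rightarrow> real
    \<Rightarrow> 'x set \<Rightarrow> 'x set \<Rightarrow> ennreal" where
  "a_inv phi U f \<tau> K Q =
     (INF S\<in>{S. spanning phi U \<tau> K Q S}. (\<Sum>\<^sub>\<infinity>w\<in>S. ennreal (exp (birkhoff_sum f \<tau> w))))"

definition elog :: "ennreal \<Rightarrow> ereal" where
  "elog a = (if a = \<infinity> then \<infinity> else if a = 0 then -\<infinity> else ereal (ln (enn2real a)))"

definition P_inv ::
  "(real \<Rightarrow> 'x \<Rightarrow> (real \<Rightarrow> real^'m) \<Rightarrow> 'x) \<Rightarrow> (real^'m) set \<Rightarrow> (real^'m \<Rightarrow> real)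
    \<Rightarrow> 'x set \<Rightarrow> 'x set \<Rightarrow> ereal" where
  "P_inv phi U f K Q = Limsup at_top (\<lambda>\<tau>::real. ereal (1 / \<tau>) * elog (a_inv phi U f \<tau> K Q))"

end

theory Submission
  imports Defs
begin

(* Since the control range is compact, |f| is bounded by some C on it. Every (s,K,Q)-spanning set
   is (t,K,Q)-spanning for t <= s, and the Birkhoff integrals of a control over [0,t] and [0,s]
   differ by at most C (s - t); hence a_t <= e^(C (s - t)) a_s, i.e. log a_t <= C tau + log a_s
   whenever t <= s <= t + tau. Rounding t up to the next multiple of tau thus changes
   (1/t) log a_t by an error of order 1/t, which does not affect the limsup. *)

lemma admissible_control_bounded_representative:
  fixes f :: "real^'m \<Rightarrow> real"
  assumes U: "U \<in> sets borel" and f: "continuous_on U f"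
    and C: "\<And>u. u \<in> U \<Longrightarrow> \<bar>f u\<bar> \<le> C" "0 \<le> C" and w: "w \<in> admissible_controls U"
  obtains h where "h \<in> borel_measurable lebesgue" "\<And>t. \<bar>h t\<bar> \<le> C"
    "negligible {t. f (w t) \<noteq> h t}"
proof -
  have w_meas: "w \<in> borel_measurable lebesgue" and "AE t in lebesgue. w t \<in> U"
    using w by (auto simp: admissible_controls_def)
  then obtain N where N: "{t \<in> space lebesgue. w t \<notin> U} \<subseteq> N" "N \<in> null_sets lebesgue"
    by (auto elim!: AE_E simp: null_sets_def)
  define h where "h t = indicator U (w t) * f (w t)" for t
  show ?thesis
  proof
    show "h \<in> borel_measurable lebesgue"
      unfolding h_def
      using measurable_compose[OF w_meas borel_measurable_continuous_on_indicator[OF U f]] by simp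
    show "\<bar>h t\<bar> \<le> C" for t
      using C by (auto simp: h_def indicator_def)
    show "negligible {t. f (w t) \<noteq> h t}"
      by (rule negligible_subset[of N]) (use N in \<open>auto simp: h_def negligible_iff_null_sets\<close>)
  qed
qed

lemma birkhoff_sum_le_add:
  fixes f :: "real^'m \<Rightarrow> real"
  assumes "U \<in> sets borel" "continuous_on U f" "\<And>u. u \<in> U \<Longrightarrow> \<bar>f u\<bar> \<le> C" "0 \<le> C"
    and "w \<in> admissible_controls U" and ts: "0 \<le> t" "t \<le> s"
  shows "birkhoff_sum f t w \<le> birkhoff_sum f s w + C * (s - t)"
proof -
  obtain h where h_meas: "h \<in> borel_measurable lebesgue" and h_bound: "\<And>t. \<bar>h t\<bar> \<le> C"
    and spike: "negligible {t. f (w t) \<noteq> h t}"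
    using admissible_control_bounded_representative[OF assms(1-5)] by blast
  have "h integrable_on {0..s}"
    by (rule measurable_bounded_by_integrable_imp_integrable_real[where g="\<lambda>_. C"])
       (use h_meas h_bound in \<open>auto intro: measurable_restrict_space1\<close>)
  then have fw_int: "(\<lambda>x. f (w x)) integrable_on {0..s}"
    by (rule integrable_spike[OF _ spike]) auto
  have "birkhoff_sum f s w = birkhoff_sum f t w + integral {t..s} (\<lambda>x. f (w x))"
    unfolding birkhoff_sum_def using Henstock_Kurzweil_Integration.integral_combine[OF ts fw_int] by simp
  moreover have "integral {t..s} (\<lambda>x. f (w x)) = integral {t..s} h"
    by (rule integral_spike[OF spike]) auto
  moreover have "integral {t..s} (\<lambda>_. - C) \<le> integral {t..s} h"
    using abs_le_D2[OF h_bound] \<open>h integrable_on {0..s}\<close> ts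
    by (intro integral_le) (auto intro: integrable_subinterval_real simp: minus_le_iff)
  ultimately show ?thesis
    using ts by (simp add: algebra_simps)
qed

lemma infsum_cmult_right_ennreal:
  "(\<Sum>\<^sub>\<infinity>x\<in>A. c * g x) = c * (\<Sum>\<^sub>\<infinity>x\<in>A. (g x :: ennreal))"
proof -
  have "(\<Sum>\<^sub>\<infinity>x\<in>A. c * g x) = (SUP F\<in>{F. finite F \<and> F \<subseteq> A}. c * sum g F)"
    by (simp add: nonneg_infsum_complete sum_distrib_left)
  also have "\<dots> = c * (\<Sum>\<^sub>\<infinity>x\<in>A. g x)"
    by (simp add: nonneg_infsum_complete SUP_mult_left_ennreal)
  finally show ?thesis .
qed

lemma INF_mult_left_ennreal:
  fixes c :: ennreal
  assumes "c \<noteq> 0" "c \<noteq> top"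
  shows "c * (INF i\<in>I. f i) = (INF i\<in>I. c * f i)"
proof (rule antisym)
  show "c * (INF i\<in>I. f i) \<le> (INF i\<in>I. c * f i)"
    by (intro INF_greatest mult_left_mono INF_lower) auto
  have "(INF i\<in>I. c * f i) / c \<le> (INF i\<in>I. f i)"
  proof (rule INF_greatest)
    fix i assume "i \<in> I"
    then have "(INF i\<in>I. c * f i) / c \<le> (c * f i) / c"
      by (intro divide_right_mono_ennreal INF_lower)
    then show "(INF i\<in>I. c * f i) / c \<le> f i"
      using assms by (simp add: mult.commute[of c] mult_divide_eq_ennreal)
  qed
  then have "c * ((INF i\<in>I. c * f i) / c) \<le> c * (INF i\<in>I. f i)"
    by (rule mult_left_mono) simp
  then show "(INF i\<in>I. c * f i) \<le> c * (INF i\<in>I. f i)"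
    using assms by (simp add: ennreal_times_divide mult.commute[of c] mult_divide_eq_ennreal)
qed

lemma spanning_antimono:
  "spanning phi U s K Q S \<Longrightarrow> t \<le> s \<Longrightarrow> spanning phi U t K Q S"
  unfolding spanning_def by fastforce

lemma a_inv_le_exp_mult:
  fixes f :: "real^'m \<Rightarrow> real"
  assumes "U \<in> sets borel" "continuous_on U f" "\<And>u. u \<in> U \<Longrightarrow> \<bar>f u\<bar> \<le> C" "0 \<le> C"
    and ts: "0 \<le> t" "t \<le> s"
  shows "a_inv phi U f t K Q \<le> ennreal (exp (C * (s - t))) * a_inv phi U f s K Q"
proof -
  let ?c = "ennreal (exp (C * (s - t)))"
  have "a_inv phi U f t K Q \<le> ?c * (\<Sum>\<^sub>\<infinity>w\<in>S. ennreal (exp (birkhoff_sum f s w)))"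
    if S: "spanning phi U s K Q S" for S
  proof -
    have "a_inv phi U f t K Q \<le> (\<Sum>\<^sub>\<infinity>w\<in>S. ennreal (exp (birkhoff_sum f t w)))"
      unfolding a_inv_def by (rule INF_lower) (simp add: spanning_antimono[OF S ts(2)])
    also have "\<dots> \<le> (\<Sum>\<^sub>\<infinity>w\<in>S. ?c * ennreal (exp (birkhoff_sum f s w)))"
    proof (rule infsum_mono)
      fix w assume "w \<in> S"
      with S have "birkhoff_sum f t w \<le> C * (s - t) + birkhoff_sum f s w"
        using birkhoff_sum_le_add[OF assms(1-4) _ ts] by (force simp: spanning_def)
      then show "ennreal (exp (birkhoff_sum f t w)) \<le> ?c * ennreal (exp (birkhoff_sum f s w))"
        by (simp add: ennreal_mult''[symmetric] ennreal_leI flip: exp_add)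
    qed (rule nonneg_summable_on_complete, simp)+
    also have "\<dots> = ?c * (\<Sum>\<^sub>\<infinity>w\<in>S. ennreal (exp (birkhoff_sum f s w)))"
      by (rule infsum_cmult_right_ennreal)
    finally show ?thesis .
  qed
  then have "a_inv phi U f t K Q
      \<le> (INF S\<in>{S. spanning phi U s K Q S}. ?c * (\<Sum>\<^sub>\<infinity>w\<in>S. ennreal (exp (birkhoff_sum f s w))))"
    by (intro INF_greatest) simp
  also have "\<dots> = ?c * a_inv phi U f s K Q"
    unfolding a_inv_def by (rule INF_mult_left_ennreal[symmetric]) simp_all
  finally show ?thesis .
qed

lemma elog_mono: "a \<le> b \<Longrightarrow> elog a \<le> elog b"
  unfolding elog_def by (cases a; cases b) (auto simp: ennreal_le_iff2 top_unique)

lemma elog_exp_mult: "elog (ennreal (exp x) * b) = ereal x + elog b"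
proof (cases b)
  case (real r)
  then show ?thesis
    by (cases "r = 0") (auto simp: elog_def ln_mult simp flip: ennreal_mult'')
next
  case top
  then show ?thesis by (simp add: elog_def ennreal_mult_top)
qed

lemma exists_multiple_between:
  assumes "0 < \<tau>" "0 \<le> t"
  obtains n :: nat where "t \<le> real n * \<tau>" "real n * \<tau> \<le> t + \<tau>"
proof
  define n where "n = nat \<lceil>t / \<tau>\<rceil>"
  have "real n = of_int \<lceil>t / \<tau>\<rceil>"
    using assms by (simp add: n_def)
  then have "t / \<tau> \<le> real n" "real n \<le> t / \<tau> + 1"
    by linarith+
  then show "t \<le> real n * \<tau>" "real n * \<tau> \<le> t + \<tau>"
    using assms by (simp_all add: field_simps)
qed

lemma ereal_scaled_le_from_later_time:
  fixes x y :: ereal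
  assumes t: "0 < t" "t \<le> s" "s \<le> t + \<tau>"
    and x: "x \<le> ereal c + y" and y: "ereal (1 / s) * y < ereal B"
  shows "ereal (1 / t) * x \<le> ereal (B + (\<bar>B\<bar> * \<tau> + c) / t)"
proof -
  have s_pos: "0 < s"
    using t by linarith
  have y_less: "y < ereal (s * B)"
  proof (cases y)
    case (real r)
    with y have "r / s < B"
      by simp
    with real s_pos show ?thesis
      by (simp add: divide_less_eq mult.commute)
  next
    case PInf
    with y s_pos show ?thesis
      by simp
  qed simp
  have "(s - t) * B \<le> (s - t) * \<bar>B\<bar>"
    using t by (intro mult_left_mono) auto
  also have "\<dots> \<le> \<tau> * \<bar>B\<bar>"
    using t by (intro mult_right_mono) auto
  finally have "(c + s * B) / t \<le> (B * t + (\<bar>B\<bar> * \<tau> + c)) / t"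
    using t by (intro divide_right_mono) (auto simp: algebra_simps)
  then have bound: "(c + s * B) / t \<le> B + (\<bar>B\<bar> * \<tau> + c) / t"
    using t by (simp add: add_divide_distrib)
  have "x \<le> ereal c + y"
    by (fact x)
  also have "\<dots> \<le> ereal (c + s * B)"
    using y_less by (metis add_left_mono less_imp_le plus_ereal.simps(1))
  finally have "ereal (1 / t) * x \<le> ereal (1 / t) * ereal (c + s * B)"
    using t by (intro ereal_mult_left_mono) auto
  also have "\<dots> \<le> ereal (B + (\<bar>B\<bar> * \<tau> + c) / t)"
    using bound by simp
  finally show ?thesis .
qed

lemma Limsup_at_top_le_limsup_multiples:
  fixes E :: "real \<Rightarrow> ereal"
  assumes \<tau>: "0 < \<tau>" and E: "\<And>t s. 0 < t \<Longrightarrow> t \<le> s \<Longrightarrow> s \<le> t + \<tau> \<Longrightarrow> E t \<le> ereal c + E s"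
  shows "Limsup at_top (\<lambda>t. ereal (1 / t) * E t) \<le>
    limsup (\<lambda>n. ereal (1 / (real n * \<tau>)) * E (real n * \<tau>))"
proof (rule dense_ge)
  fix y assume y: "limsup (\<lambda>n. ereal (1 / (real n * \<tau>)) * E (real n * \<tau>)) < y"
  show "Limsup at_top (\<lambda>t. ereal (1 / t) * E t) \<le> y"
  proof (cases y)
    case (real B)
    obtain N where N: "\<And>n. N \<le> n \<Longrightarrow> ereal (1 / (real n * \<tau>)) * E (real n * \<tau>) < ereal B"
      using Limsup_lessD[OF y] real by (auto simp: eventually_sequentially)
    define k where "k = \<bar>B\<bar> * \<tau> + c"
    have "eventually (\<lambda>t. ereal (1 / t) * E t \<le> ereal (B + k / t)) at_top"
      using eventually_ge_at_top[of "max \<tau> (real N * \<tau>)"]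
    proof eventually_elim
      case (elim t)
      then have t_pos: "0 < t"
        using \<tau> by linarith
      then obtain n where n: "t \<le> real n * \<tau>" "real n * \<tau> \<le> t + \<tau>"
        using exists_multiple_between[OF \<tau> less_imp_le[OF t_pos]] by blast
      have "real N * \<tau> \<le> real n * \<tau>"
        using elim n by linarith
      then have "N \<le> n"
        using \<tau> by simp
      show ?case
        unfolding k_def by (rule ereal_scaled_le_from_later_time[OF t_pos n E[OF t_pos n] N[OF \<open>N \<le> n\<close>]])
    qed
    then have "Limsup at_top (\<lambda>t. ereal (1 / t) * E t) \<le> Limsup at_top (\<lambda>t. ereal (B + k / t))"
      by (rule Limsup_mono)
    also have "\<dots> = y"
    proof (rule lim_imp_Limsup)
      have "((\<lambda>t. B + k / t) \<longlongrightarrow> B + 0) at_top"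
        by (intro tendsto_add tendsto_const tendsto_divide_0[OF tendsto_const]
            filterlim_at_top_imp_at_infinity filterlim_ident)
      then show "((\<lambda>t. ereal (B + k / t)) \<longlongrightarrow> y) at_top"
        unfolding real by (intro tendsto_ereal) simp
    qed simp
    finally show ?thesis .
  qed (use y in simp_all)
qed

lemma limsup_multiples_le_Limsup_at_top:
  fixes G :: "real \<Rightarrow> 'a::complete_linorder"
  assumes "0 < \<tau>"
  shows "limsup (\<lambda>n. G (real n * \<tau>)) \<le> Limsup at_top G"
proof -
  have "filterlim (\<lambda>n. real n * \<tau>) at_top sequentially"
    using assms by (intro filterlim_at_top_mult_tendsto_pos[OF tendsto_const] filterlim_real_sequentially)
  then show ?thesis
    unfolding Limsup_le_iff using eventually_compose_filterlim Limsup_lessD by blast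
qed

lemma Limsup_at_top_eq_limsup_multiples:
  fixes E :: "real \<Rightarrow> ereal"
  assumes "0 < \<tau>" and "\<And>t s. 0 < t \<Longrightarrow> t \<le> s \<Longrightarrow> s \<le> t + \<tau> \<Longrightarrow> E t \<le> ereal c + E s"
  shows "Limsup at_top (\<lambda>t. ereal (1 / t) * E t) =
    limsup (\<lambda>n. ereal (1 / (real n * \<tau>)) * E (real n * \<tau>))"
  using Limsup_at_top_le_limsup_multiples[OF assms]
    limsup_multiples_le_Limsup_at_top[OF assms(1), of "\<lambda>t. ereal (1 / t) * E t"]
  by (rule antisym)

theorem proposition2p9:
  fixes phi :: "real \<Rightarrow> 'x::{t2_space, second_countable_topology} \<Rightarrow> (real \<Rightarrow> real^'m) \<Rightarrow> 'x"
    and U :: "(real^'m) set" and f :: "real^'m \<Rightarrow> real" and K Q :: "'x set" and \<tau> :: real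
  assumes "compact U"
    and "continuous_on U f"
    and "admissible_pair phi U K Q"
    and "\<tau> > 0"
  shows "P_inv phi U f K Q =
    limsup (\<lambda>n::nat. ereal (1 / (real n * \<tau>)) * elog (a_inv phi U f (real n * \<tau>) K Q))"
proof -
  have "bounded (f ` U)"
    using compact_continuous_image[OF assms(2,1)] by (rule compact_imp_bounded)
  then obtain C where C: "\<And>u. u \<in> U \<Longrightarrow> \<bar>f u\<bar> \<le> C" "0 \<le> C"
    by (force simp: bounded_pos)
  have U_borel: "U \<in> sets borel"
    using assms(1) by (simp add: compact_imp_closed)
  have "elog (a_inv phi U f t K Q) \<le> ereal (C * \<tau>) + elog (a_inv phi U f s K Q)"
    if "0 < t" "t \<le> s" "s \<le> t + \<tau>" for t s
  proof -
    have "a_inv phi U f t K Q \<le> ennreal (exp (C * (s - t))) * a_inv phi U f s K Q"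
      using that by (intro a_inv_le_exp_mult[OF U_borel assms(2) C]) auto
    then have "elog (a_inv phi U f t K Q) \<le> ereal (C * (s - t)) + elog (a_inv phi U f s K Q)"
      by (metis elog_mono elog_exp_mult)
    also have "\<dots> \<le> ereal (C * \<tau>) + elog (a_inv phi U f s K Q)"
      using that C by (intro add_right_mono) (simp add: mult_left_mono)
    finally show ?thesis .
  qed
  then show ?thesis
    unfolding P_inv_def by (rule Limsup_at_top_eq_limsup_multiples[OF assms(4)])
qed

end
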